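(* Let $G'$ be a finite loopless multigraph with edge multiplicity at most $2$ and maximum degree $\Delta>10^{20}$, let $H$ be the subgraph of $G'$ induced by the vertices of degree less than $\Delta/3$, assume $H$ has no multiple edges, and let $\sigma$ be a proper edge coloring of $G'$. Let $\sigma_1$ be a possible outcome of Phase I applied to $\sigma$ such that (a) $|N(v)\cap L|\le\Delta/100$ for every $v\in V(G')\setminus V(H)$, and (b) $|S_{\sigma_1}(u)\triangle S_{\sigma_1}(v)|\ge 10$ for every two adjacent $u,v\in V(G')\setminus V(H)$ with $\deg(u)=\deg(v)$ and $u\notin L$. Apply Phase II (defined in the context) to $\sigma_1$, obtaining $\sigma_2$. Then with positive probability: (a) for every vertex $v\in V(G')\setminus V(H)\setminus L$, $|UC'_v|\le 4$; (b) for every two adjacent vertices $u,v\in V(G')\setminus V(H)$ with $\deg(u)=\deg(v)$, $S_{\sigma_2}(u)\neq S_{\sigma_2}(v)$.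
   Context: Phase I: (1) each edge $e\in E(G')\setminus E(H)$ is independently "uncolored" with probability $180/\Delta$; $UC_v$ is the set of edges at $v$ uncolored in this step. (2) A vertex $v$ is recovered if $|UC_v|>290$; for every recovered vertex all edges of $UC_v$ get back their $\sigma$-color. The result $\sigma_1$: an edge is uncolored iff it was uncolored in step (1) and neither endpoint is recovered. $L$ is the set of vertices $v\in V(G')\setminus V(H)$ incident to fewer than $20$ edges uncolored in $\sigma_1$. Phase II: for each vertex $u\in L$, independently choose uniformly at random $5$ edges $uv_1,\dots,uv_5$ with $v_i\notin L$ and $uv_i$ colored in $\sigma_1$, and uncolor them; the result is $\sigma_2$. For $u\in V(G')\setminus V(H)$, $UC'_u$ is the set of edges incident to $u$ uncolored in Phase II. $S_c(v)$ is the set of colors on colored edges at $v$ under partial coloring $c$; $A\triangle B=(A\setminus B)\cup(B\setminus A)$; $N(v)$ is the neighborhood of $v$ in $G'$. *)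

theory Defs
  imports "HOL-Probability.Probability"
begin

definition multigraph2 :: "'v set \<Rightarrow> 'e set \<Rightarrow> ('e \<Rightarrow> 'v set) \<Rightarrow> bool" where
  "multigraph2 V E ends \<longleftrightarrow> finite V \<and> finite E \<and>
     (\<forall>e\<in>E. ends e \<subseteq> V \<and> card (ends e) = 2) \<and>
     (\<forall>u v. card {e\<in>E. ends e = {u, v}} \<le> 2)"

definition deg :: "'e set \<Rightarrow> ('e \<Rightarrow> 'v set) \<Rightarrow> 'v \<Rightarrow> nat" where
  "deg E ends v = card {e\<in>E. v \<in> ends e}"

definition maxdeg :: "'v set \<Rightarrow> 'e set \<Rightarrow> ('e \<Rightarrow> 'v set) \<Rightarrow> nat" where
  "maxdeg V E ends = Max (deg E ends ` V)"

definition adjacent :: "'e set \<Rightarrow> ('e \<Rightarrow> 'v set) \<Rightarrow> 'v \<Rightarrow> 'v \<Rightarrow> bool" where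
  "adjacent E ends u v \<longleftrightarrow> (\<exists>e\<in>E. ends e = {u, v})"

definition nbhd :: "'e set \<Rightarrow> ('e \<Rightarrow> 'v set) \<Rightarrow> 'v \<Rightarrow> 'v set" where
  "nbhd E ends v = {w. adjacent E ends v w}"

definition HV :: "'v set \<Rightarrow> 'e set \<Rightarrow> ('e \<Rightarrow> 'v set) \<Rightarrow> 'v set" where
  "HV V E ends = {v\<in>V. real (deg E ends v) < real (maxdeg V E ends) / 3}"

definition HE :: "'v set \<Rightarrow> 'e set \<Rightarrow> ('e \<Rightarrow> 'v set) \<Rightarrow> 'e set" where
  "HE V E ends = {e\<in>E. ends e \<subseteq> HV V E ends}"

definition proper_edge_coloring :: "'e set \<Rightarrow> ('e \<Rightarrow> 'v set) \<Rightarrow> ('e \<Rightarrow> 'c) \<Rightarrow> bool" where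
  "proper_edge_coloring E ends \<sigma> \<longleftrightarrow>
     (\<forall>e\<in>E. \<forall>f\<in>E. e \<noteq> f \<and> ends e \<inter> ends f \<noteq> {} \<longrightarrow> \<sigma> e \<noteq> \<sigma> f)"

text \<open>Colors on colored edges at v under a partial coloring (None = uncolored).\<close>
definition Scol :: "'e set \<Rightarrow> ('e \<Rightarrow> 'v set) \<Rightarrow> ('e \<Rightarrow> 'c option) \<Rightarrow> 'v \<Rightarrow> 'c set" where
  "Scol E ends c v = {col. \<exists>e\<in>E. v \<in> ends e \<and> c e = Some col}"

text \<open>Phase I, for a given set U of edges uncolored in step (1).\<close>
definition UC :: "'e set \<Rightarrow> ('e \<Rightarrow> 'v set) \<Rightarrow> 'v \<Rightarrow> 'e set" where
  "UC U ends v = {e\<in>U. v \<in> ends e}"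

definition recovered :: "'e set \<Rightarrow> ('e \<Rightarrow> 'v set) \<Rightarrow> 'v \<Rightarrow> bool" where
  "recovered U ends v \<longleftrightarrow> card (UC U ends v) > 290"

definition phase1 :: "'e set \<Rightarrow> ('e \<Rightarrow> 'v set) \<Rightarrow> ('e \<Rightarrow> 'c) \<Rightarrow> 'e \<Rightarrow> 'c option" where
  "phase1 U ends \<sigma> e =
     (if e \<in> U \<and> (\<forall>v\<in>ends e. \<not> recovered U ends v) then None else Some (\<sigma> e))"

definition Lset :: "'v set \<Rightarrow> 'e set \<Rightarrow> ('e \<Rightarrow> 'v set) \<Rightarrow> ('e \<Rightarrow> 'c option) \<Rightarrow> 'v set" where
  "Lset V E ends c1 = {v\<in>V - HV V E ends. card {e\<in>E. v \<in> ends e \<and> c1 e = None} < 20}"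

definition cand :: "'v set \<Rightarrow> 'e set \<Rightarrow> ('e \<Rightarrow> 'v set) \<Rightarrow> ('e \<Rightarrow> 'c option) \<Rightarrow> 'v \<Rightarrow> 'e set" where
  "cand V E ends c1 u = {e\<in>E. u \<in> ends e \<and> c1 e \<noteq> None \<and>
      (\<forall>w\<in>ends e. w \<noteq> u \<longrightarrow> w \<notin> Lset V E ends c1)}"

definition phase2_dist :: "'v set \<Rightarrow> 'e set \<Rightarrow> ('e \<Rightarrow> 'v set) \<Rightarrow> ('e \<Rightarrow> 'c option) \<Rightarrow> ('v \<Rightarrow> 'e set) pmf" where
  "phase2_dist V E ends c1 =
     Pi_pmf (Lset V E ends c1) {}
       (\<lambda>u. pmf_of_set {S. S \<subseteq> cand V E ends c1 u \<and> card S = 5})"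

definition phase2 :: "'v set \<Rightarrow> 'e set \<Rightarrow> ('e \<Rightarrow> 'v set) \<Rightarrow> ('e \<Rightarrow> 'c option) \<Rightarrow> ('v \<Rightarrow> 'e set) \<Rightarrow> 'e \<Rightarrow> 'c option" where
  "phase2 V E ends c1 ch e =
     (if \<exists>u\<in>Lset V E ends c1. e \<in> ch u then None else c1 e)"

definition UC2 :: "'v set \<Rightarrow> 'e set \<Rightarrow> ('e \<Rightarrow> 'v set) \<Rightarrow> ('e \<Rightarrow> 'c option) \<Rightarrow> ('v \<Rightarrow> 'e set) \<Rightarrow> 'v \<Rightarrow> 'e set" where
  "UC2 V E ends c1 ch u = {e\<in>E. u \<in> ends e \<and> (\<exists>w\<in>Lset V E ends c1. e \<in> ch w)}"

end

theory Submission
  imports Defs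
begin

(* Since phase2_dist is a product of uniform distributions, it suffices to exhibit one good
   outcome; instead of the Local Lemma we construct it deterministically.

   A vertex of L has at least Delta/3 - 19 - Delta/50 candidate edges, and a vertex outside L is
   the far end of at most Delta/50 candidates. We pick 5 candidates at every vertex of L so that
   no vertex outside L receives more than 4 picks and adjacent equal-degree vertices of L keep
   different colour sets. Then a vertex outside L loses at most 4 colours and one in L loses 5,
   so the 10 colours of hypothesis (b) still separate equal-degree neighbours.

   The picks are made one edge at a time. Adding an edge at a vertex may overload its far end;
   the excess is pushed on by exchanging another pick into that target, which moves the free
   slot ("hole") to another vertex, as along an alternating path. If no sequence of moves reaches
   an unsaturated target, the reachable targets T carry 4 picks each, all made by the vertices R
   that can hold the hole, so 4 |T| <= 5 |R|; and every vertex of R has all but 5 + Delta/100 of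
   its candidates pointing into T, so |R| (0.3 Delta - 24) <= |T| Delta/50. These contradict
   each other. *)

lemma sum_card_fibres:
  assumes "finite A" "finite T"
  shows "(\<Sum>t\<in>T. card {a\<in>A. f a = t}) = card {a\<in>A. f a \<in> T}"
proof -
  have "card (\<Union>t\<in>T. {a\<in>A. f a = t}) = (\<Sum>t\<in>T. card {a\<in>A. f a = t})"
    by (rule card_UN_disjoint) (use assms in auto)
  moreover have "(\<Union>t\<in>T. {a\<in>A. f a = t}) = {a\<in>A. f a \<in> T}" by auto
  ultimately show ?thesis by simp
qed

lemma card_filter_insert:
  assumes "finite A" "b \<notin> A"
  shows "card {a\<in>insert b A. P a} = card {a\<in>A. P a} + (if P b then 1 else 0)"
proof -
  have "{a\<in>insert b A. P a} = (if P b then insert b {a\<in>A. P a} else {a\<in>A. P a})" by auto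
  then show ?thesis using assms by simp
qed

lemma card_filter_remove:
  assumes "finite A" "r \<in> A"
  shows "card {a\<in>A - {r}. P a} + (if P r then 1 else 0) = card {a\<in>A. P a}"
  using card_filter_insert[of "A - {r}" r P] assms by (simp add: insert_absorb)

section \<open>Capacitated selections with conflicts\<close>

(* An abstraction of Phase II: the clients are the vertices of L, the picks are the edges to be
   uncoloured, tgt e is the far end of e, and sig x S is the colour set left at x once S is
   uncoloured. *)
locale capacitated_selection =
  fixes L :: "'a set" and cand :: "'a \<Rightarrow> 'e set" and tgt :: "'e \<Rightarrow> 't" and Cap :: "'t set"
    and conflict :: "'a \<Rightarrow> 'a \<Rightarrow> bool" and sig :: "'a \<Rightarrow> 'e set \<Rightarrow> 's"
    and m k :: nat and c g D :: real
  assumes finite_L: "finite L"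
    and finite_cand: "x \<in> L \<Longrightarrow> finite (cand x)"
    and conflict_sym: "conflict x y \<Longrightarrow> conflict y x"
    and few_conflicts: "x \<in> L \<Longrightarrow> real (card {y\<in>L. conflict x y \<and> y \<noteq> x}) \<le> g"
    and many_cand: "x \<in> L \<Longrightarrow> c \<le> real (card (cand x))"
    and demand_le: "t \<in> Cap \<Longrightarrow> real (\<Sum>x\<in>L. card {e\<in>cand x. tgt e = t}) \<le> D"
    and sig_inj: "\<lbrakk>x \<in> L; b \<in> cand x; b' \<in> cand x; b \<notin> B; b' \<notin> B;
                   sig x (insert b B) = sig x (insert b' B)\<rbrakk> \<Longrightarrow> b = b'"
    and D_nonneg: "0 \<le> D"
    and m_pos: "0 < m"
    and slack: "real m * D < real k * (c - real m - g)"
begin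

definition load :: "('a \<Rightarrow> 'e set) \<Rightarrow> 't \<Rightarrow> nat" where
  "load s t = (\<Sum>x\<in>L. card {e\<in>s x. tgt e = t})"

definition num_selected :: "('a \<Rightarrow> 'e set) \<Rightarrow> nat" where
  "num_selected s = (\<Sum>x\<in>L. card (s x))"

definition selection :: "('a \<Rightarrow> 'e set) \<Rightarrow> bool" where
  "selection s \<longleftrightarrow> (\<forall>x\<in>L. s x \<subseteq> cand x \<and> card (s x) \<le> m) \<and> (\<forall>x. x \<notin> L \<longrightarrow> s x = {})"

definition conflict_free :: "('a \<Rightarrow> 'e set) \<Rightarrow> bool" where
  "conflict_free s \<longleftrightarrow> (\<forall>x\<in>L. \<forall>y\<in>L. conflict x y \<and> x \<noteq> y \<and> card (s x) = m \<and> card (s y) = m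
      \<longrightarrow> sig x (s x) \<noteq> sig y (s y))"

definition feasible :: "('a \<Rightarrow> 'e set) \<Rightarrow> bool" where
  "feasible s \<longleftrightarrow> selection s \<and> (\<forall>t\<in>Cap. load s t \<le> k) \<and> conflict_free s"

definition fill :: "('a \<Rightarrow> 'e set) \<Rightarrow> 'a \<Rightarrow> 'e \<Rightarrow> 'a \<Rightarrow> 'e set" where
  "fill s y b = s(y := insert b (s y))"

definition fits :: "('a \<Rightarrow> 'e set) \<Rightarrow> 'a \<Rightarrow> 'e \<Rightarrow> bool" where
  "fits s y b \<longleftrightarrow> card (insert b (s y)) = m \<longrightarrow>
     (\<forall>z\<in>L. conflict y z \<and> z \<noteq> y \<and> card (s z) = m \<longrightarrow> sig y (insert b (s y)) \<noteq> sig z (s z))"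

lemma selection_finite: "selection s \<Longrightarrow> finite (s x)"
  unfolding selection_def using finite_cand by (metis finite.emptyI finite_subset)

lemma load_fun_upd:
  assumes "y \<in> L"
  shows "load (s(y := N)) t + card {e\<in>s y. tgt e = t} = load s t + card {e\<in>N. tgt e = t}"
proof -
  have "(\<Sum>x\<in>L - {y}. card {e\<in>(s(y := N)) x. tgt e = t}) = (\<Sum>x\<in>L - {y}. card {e\<in>s x. tgt e = t})"
    by (rule sum.cong) auto
  with sum.remove[OF finite_L assms, of "\<lambda>x. card {e\<in>s x. tgt e = t}"]
       sum.remove[OF finite_L assms, of "\<lambda>x. card {e\<in>(s(y := N)) x. tgt e = t}"]
  show ?thesis unfolding load_def by simp
qed

lemma num_selected_fun_upd:
  assumes "y \<in> L"
  shows "num_selected (s(y := N)) + card (s y) = num_selected s + card N"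
proof -
  have "(\<Sum>x\<in>L - {y}. card ((s(y := N)) x)) = (\<Sum>x\<in>L - {y}. card (s x))"
    by (rule sum.cong) auto
  with sum.remove[OF finite_L assms, of "\<lambda>x. card (s x)"]
       sum.remove[OF finite_L assms, of "\<lambda>x. card ((s(y := N)) x)"]
  show ?thesis unfolding num_selected_def by simp
qed

lemma load_fill:
  assumes "y \<in> L" "finite (s y)" "b \<notin> s y"
  shows "load (fill s y b) t = load s t + (if tgt b = t then 1 else 0)"
  using load_fun_upd[OF assms(1), of s "insert b (s y)" t] card_filter_insert[OF assms(2,3)]
  unfolding fill_def by simp

lemma num_selected_fill:
  assumes "y \<in> L" "finite (s y)" "b \<notin> s y"
  shows "num_selected (fill s y b) = Suc (num_selected s)"
  using num_selected_fun_upd[OF assms(1), of s "insert b (s y)"] assms(2,3) unfolding fill_def by simp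

lemma load_remove:
  assumes "y \<in> L" "finite (s y)" "r \<in> s y"
  shows "load (s(y := s y - {r})) t + (if tgt r = t then 1 else 0) = load s t"
  using load_fun_upd[OF assms(1), of s "s y - {r}" t] card_filter_remove[OF assms(2,3), of "\<lambda>e. tgt e = t"]
  by (simp split: if_splits)

lemma num_selected_remove:
  assumes "y \<in> L" "finite (s y)" "r \<in> s y"
  shows "Suc (num_selected (s(y := s y - {r}))) = num_selected s"
  using num_selected_fun_upd[OF assms(1), of s "s y - {r}"] assms(2,3) card_Diff1_less[OF assms(2,3)]
  by (simp add: card_Diff_singleton)

lemma selection_fill:
  assumes "selection s" "y \<in> L" "b \<in> cand y" "card (s y) < m"
  shows "selection (fill s y b)"
proof -
  have "card (insert b (s y)) \<le> m"
    using assms(4) card_insert_le_m1[of m "s y" b] by linarith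
  then show ?thesis using assms unfolding selection_def fill_def by auto
qed

lemma selection_remove:
  assumes "selection s"
  shows "selection (s(y := s y - {r}))"
  using assms card_Diff1_le[of "s y" r] unfolding selection_def
  by (auto intro: le_trans)

lemma conflict_free_fill:
  assumes "conflict_free s" "fits s y b"
  shows "conflict_free (fill s y b)"
  unfolding conflict_free_def
proof (intro ballI impI)
  fix x z assume "x \<in> L" "z \<in> L"
    and xz: "conflict x z \<and> x \<noteq> z \<and> card (fill s y b x) = m \<and> card (fill s y b z) = m"
  consider "x = y" | "z = y" | "x \<noteq> y" "z \<noteq> y" by blast
  then show "sig x (fill s y b x) \<noteq> sig z (fill s y b z)"
  proof cases
    case 1
    then show ?thesis using assms(2) \<open>z \<in> L\<close> xz unfolding fits_def fill_def by auto
  next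
    case 2
    then have "conflict y x" "x \<noteq> y" using xz conflict_sym by auto
    then show ?thesis using 2 assms(2) \<open>x \<in> L\<close> xz unfolding fits_def fill_def by auto
  next
    case 3
    then show ?thesis using assms(1) \<open>x \<in> L\<close> \<open>z \<in> L\<close> xz unfolding conflict_free_def fill_def by auto
  qed
qed

lemma conflict_free_remove:
  assumes "conflict_free s" "selection s" "r \<in> s y"
  shows "conflict_free (s(y := s y - {r}))"
proof -
  have "y \<in> L" using assms(2,3) unfolding selection_def by auto
  then have "card (s y) \<le> m" using assms(2) unfolding selection_def by auto
  then have "card (s y - {r}) < m"
    using card_Diff1_less[OF selection_finite[OF assms(2)] assms(3)] by linarith
  then show ?thesis using assms(1) unfolding conflict_free_def by auto
qed

(* hole s u h y: starting from s with a free slot at u, h is reached by filling the slot at y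
   with b and then removing a pick r with the same target from some client z, which becomes the
   new holder of the slot. *)
inductive hole :: "('a \<Rightarrow> 'e set) \<Rightarrow> 'a \<Rightarrow> ('a \<Rightarrow> 'e set) \<Rightarrow> 'a \<Rightarrow> bool" for s u where
  start: "hole s u s u"
| shift: "\<lbrakk>hole s u h y; b \<in> cand y - h y; fits h y b; z \<in> L; r \<in> fill h y b z; tgt r = tgt b\<rbrakk>
          \<Longrightarrow> hole s u ((fill h y b)(z := fill h y b z - {r})) z"

lemma hole_invariant:
  assumes "hole s u h y" "feasible s" "u \<in> L" "card (s u) < m"
  shows "y \<in> L \<and> card (h y) < m \<and> selection h \<and> conflict_free h
    \<and> load h = load s \<and> num_selected h = num_selected s"
  using assms(1)
proof induction
  case start
  then show ?case using assms(2-4) unfolding feasible_def by simp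
next
  case (shift h y b z r)
  let ?h' = "fill h y b"
  have sel': "selection ?h'" using shift selection_fill by blast
  have fin: "finite (?h' z)" using selection_finite[OF sel'] .
  have "card (?h' z) \<le> m" using sel' shift(4) unfolding selection_def by blast
  then have "card (?h' z - {r}) < m" using card_Diff1_less[OF fin shift(5)] by linarith
  moreover have "selection (?h'(z := ?h' z - {r}))" using selection_remove[OF sel'] .
  moreover have "conflict_free (?h'(z := ?h' z - {r}))"
    using shift conflict_free_fill conflict_free_remove sel' by blast
  moreover have "load (?h'(z := ?h' z - {r})) = load s"
  proof
    fix t
    have "load ?h' t = load h t + (if tgt b = t then 1 else 0)"
      using shift load_fill selection_finite by blast
    then show "load (?h'(z := ?h' z - {r})) t = load s t"
      using load_remove[where s = ?h' and t = t, OF shift(4) fin shift(5)] shift by simp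
  qed
  moreover have "num_selected (?h'(z := ?h' z - {r})) = num_selected s"
    using num_selected_remove[where s = ?h', OF shift(4) fin shift(5)] num_selected_fill shift selection_finite
    by (metis DiffE Suc_inject)
  ultimately show ?case using shift(4) by (simp only: fun_upd_same)
qed

lemma hole_changed:
  assumes "hole s u h y" "h x \<noteq> s x"
  shows "\<exists>h'. hole s u h' x"
  using assms
proof induction
  case start
  then show ?case by simp
next
  case (shift h y b z r)
  show ?case
  proof (cases "x = z \<or> x = y")
    case True
    then show ?thesis using hole.shift[OF shift(1-6)] shift(1) by blast
  next
    case False
    then show ?thesis using shift unfolding fill_def by auto
  qed
qed

lemma card_unfit_le:
  assumes "y \<in> L"
  shows "card {b\<in>cand y - h y. \<not> fits h y b} \<le> card {z\<in>L. conflict y z \<and> z \<noteq> y}"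
proof -
  let ?N = "{z\<in>L. conflict y z \<and> z \<noteq> y}"
  let ?B = "\<lambda>z. {b\<in>cand y - h y. sig y (insert b (h y)) = sig z (h z)}"
  have "{b\<in>cand y - h y. \<not> fits h y b} \<subseteq> (\<Union>z\<in>?N. ?B z)" unfolding fits_def by auto
  then have "card {b\<in>cand y - h y. \<not> fits h y b} \<le> card (\<Union>z\<in>?N. ?B z)"
    by (rule card_mono[rotated]) (use finite_L finite_cand[OF assms] in auto)
  also have "\<dots> \<le> (\<Sum>z\<in>?N. card (?B z))" by (rule card_UN_le) (use finite_L in auto)
  also have "\<dots> \<le> (\<Sum>z\<in>?N. 1)"
  proof (rule sum_mono)
    fix z
    have "finite (?B z)" using finite_cand[OF assms] by auto
    then show "card (?B z) \<le> 1"
      using sig_inj[OF assms, of _ _ "h y"] by (auto simp: card_le_Suc0_iff_eq)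
  qed
  finally show ?thesis by simp
qed

context
  fixes s :: "'a \<Rightarrow> 'e set" and u :: 'a
  assumes feasible_s: "feasible s" and u_L: "u \<in> L" and u_short: "card (s u) < m"
    and maximal: "\<And>s'. feasible s' \<Longrightarrow> num_selected s' \<noteq> Suc (num_selected s)"
begin

definition reached_targets :: "'t set" where
  "reached_targets = {tgt b | h y b. hole s u h y \<and> b \<in> cand y - h y \<and> fits h y b}"

definition hole_clients :: "'a set" where
  "hole_clients = {y. \<exists>h. hole s u h y}"

lemma fill_target_saturated:
  assumes "hole s u h y" "b \<in> cand y - h y" "fits h y b"
  shows "tgt b \<in> Cap \<and> load s (tgt b) = k"
proof (rule ccontr)
  assume unsaturated: "\<not> (tgt b \<in> Cap \<and> load s (tgt b) = k)"
  note inv = hole_invariant[OF assms(1) feasible_s u_L u_short]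
  have fin: "finite (h y)" using inv selection_finite by blast
  have "feasible (fill h y b)"
    unfolding feasible_def
  proof (intro conjI ballI)
    show "selection (fill h y b)" using inv assms(2) selection_fill by blast
    show "conflict_free (fill h y b)" using inv assms(3) conflict_free_fill by blast
    fix t assume "t \<in> Cap"
    moreover have "load (fill h y b) t = load s t + (if tgt b = t then 1 else 0)"
      using load_fill[where s = h, OF _ fin] inv assms(2) by simp
    ultimately show "load (fill h y b) t \<le> k"
      using unsaturated feasible_s unfolding feasible_def by (auto simp: le_less)
  qed
  moreover have "num_selected (fill h y b) = Suc (num_selected s)"
    using num_selected_fill inv fin assms(2) by simp
  ultimately show False using maximal by blast
qed

lemma reached_targets_saturated:
  "t \<in> reached_targets \<Longrightarrow> t \<in> Cap \<and> load s t = k"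
  unfolding reached_targets_def using fill_target_saturated by blast

lemma hole_clients_subset: "hole_clients \<subseteq> L"
  unfolding hole_clients_def using hole_invariant feasible_s u_L u_short by blast

lemma finite_reached_targets: "finite reached_targets"
proof (rule finite_subset)
  show "reached_targets \<subseteq> tgt ` (\<Union>y\<in>L. cand y)"
    unfolding reached_targets_def using hole_invariant feasible_s u_L u_short by blast
  show "finite (tgt ` (\<Union>y\<in>L. cand y))" using finite_L finite_cand by blast
qed

lemma card_cand_le:
  assumes "y \<in> hole_clients"
  shows "card (cand y) \<le> card {b\<in>cand y. tgt b \<in> reached_targets} + m + card {z\<in>L. conflict y z \<and> z \<noteq> y}"
proof -
  obtain h where h: "hole s u h y" using assms unfolding hole_clients_def by blast
  note inv = hole_invariant[OF h feasible_s u_L u_short]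
  let ?unfit = "{b\<in>cand y - h y. \<not> fits h y b}"
  have "cand y \<subseteq> {b\<in>cand y. tgt b \<in> reached_targets} \<union> h y \<union> ?unfit"
    unfolding reached_targets_def using h by blast
  then have "card (cand y) \<le> card ({b\<in>cand y. tgt b \<in> reached_targets} \<union> h y \<union> ?unfit)"
    by (rule card_mono[rotated]) (use inv finite_cand selection_finite in auto)
  also have "\<dots> \<le> card {b\<in>cand y. tgt b \<in> reached_targets} + card (h y) + card ?unfit"
    by (meson add_mono card_Un_le le_trans order_refl)
  finally show ?thesis using inv card_unfit_le[of y h] by linarith
qed

lemma hole_client_of_reached:
  assumes "x \<in> L" "e \<in> s x" "tgt e \<in> reached_targets"
  shows "x \<in> hole_clients"
proof -
  obtain h y b where h: "hole s u h y" and b: "b \<in> cand y - h y" "fits h y b" "tgt e = tgt b"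
    using assms(3) unfolding reached_targets_def by blast
  show ?thesis
  proof (cases "e \<in> fill h y b x")
    case True
    show ?thesis
      using hole.shift[OF h b(1,2) assms(1) True b(3)] unfolding hole_clients_def by blast
  next
    case False
    then have "x = y \<or> h x \<noteq> s x" using assms(2) unfolding fill_def by (cases "x = y") auto
    then show ?thesis
    proof
      assume "x = y"
      then show ?thesis using h unfolding hole_clients_def by blast
    next
      assume "h x \<noteq> s x"
      then show ?thesis using hole_changed[OF h] unfolding hole_clients_def by blast
    qed
  qed
qed

lemma capacity_count: "k * card reached_targets \<le> m * card hole_clients"
proof -
  let ?T = reached_targets and ?R = hole_clients
  have sel: "selection s" using feasible_s unfolding feasible_def by blast
  have "k * card ?T = (\<Sum>t\<in>?T. load s t)"
    using reached_targets_saturated by (simp add: sum.cong[of ?T ?T "load s" "\<lambda>_. k"])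
  also have "\<dots> = (\<Sum>x\<in>L. \<Sum>t\<in>?T. card {e\<in>s x. tgt e = t})"
    unfolding load_def by (rule sum.swap)
  also have "\<dots> = (\<Sum>x\<in>L. card {e\<in>s x. tgt e \<in> ?T})"
    by (intro sum.cong refl sum_card_fibres selection_finite[OF sel] finite_reached_targets)
  also have "\<dots> = (\<Sum>x\<in>?R. card {e\<in>s x. tgt e \<in> ?T})"
  proof (rule sum.mono_neutral_right[OF finite_L hole_clients_subset], intro ballI)
    fix x assume "x \<in> L - ?R"
    then have "{e\<in>s x. tgt e \<in> ?T} = {}" using hole_client_of_reached by blast
    then show "card {e\<in>s x. tgt e \<in> ?T} = 0" by (simp only: card.empty)
  qed
  also have "\<dots> \<le> (\<Sum>x\<in>?R. m)"
  proof (rule sum_mono)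
    fix x assume "x \<in> ?R"
    then have "card (s x) \<le> m" using hole_clients_subset sel unfolding selection_def by auto
    moreover have "card {e\<in>s x. tgt e \<in> ?T} \<le> card (s x)"
      using selection_finite[OF sel] by (intro card_mono) auto
    ultimately show "card {e\<in>s x. tgt e \<in> ?T} \<le> m" by linarith
  qed
  finally show ?thesis by (simp add: mult.commute)
qed

lemma demand_count: "real (card hole_clients) * (c - real m - g) \<le> real (card reached_targets) * D"
proof -
  let ?T = reached_targets and ?R = hole_clients
  have "real (card ?R) * (c - real m - g) \<le> (\<Sum>y\<in>?R. real (card {b\<in>cand y. tgt b \<in> ?T}))"
  proof -
    have "c - real m - g \<le> real (card {b\<in>cand y. tgt b \<in> ?T})" if "y \<in> ?R" for y
      using that card_cand_le[OF that] many_cand few_conflicts hole_clients_subset by force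
    then show ?thesis using sum_mono[of ?R "\<lambda>_. c - real m - g"] by simp
  qed
  also have "\<dots> \<le> (\<Sum>y\<in>L. real (card {b\<in>cand y. tgt b \<in> ?T}))"
    by (rule sum_mono2[OF finite_L hole_clients_subset]) auto
  also have "\<dots> = (\<Sum>y\<in>L. \<Sum>t\<in>?T. real (card {b\<in>cand y. tgt b = t}))"
    by (intro sum.cong refl)
      (simp add: sum_card_fibres[OF finite_cand finite_reached_targets] flip: of_nat_sum)
  also have "\<dots> = (\<Sum>t\<in>?T. real (\<Sum>y\<in>L. card {b\<in>cand y. tgt b = t}))"
    unfolding of_nat_sum by (rule sum.swap)
  also have "\<dots> \<le> (\<Sum>t\<in>?T. D)"
    by (rule sum_mono) (use demand_le reached_targets_saturated in blast)
  finally show ?thesis by simp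
qed

lemma no_maximal_short_selection: False
proof -
  let ?T = reached_targets and ?R = hole_clients
  have "u \<in> ?R" unfolding hole_clients_def using hole.start by blast
  moreover have "finite ?R" using hole_clients_subset finite_L finite_subset by blast
  ultimately have R_pos: "0 < real (card ?R)" using card_gt_0_iff by fastforce
  have "real k * (real (card ?R) * (c - real m - g)) \<le> real k * (real (card ?T) * D)"
    using demand_count by (rule mult_left_mono) simp
  also have "\<dots> = real (k * card ?T) * D" by simp
  also have "\<dots> \<le> real (m * card ?R) * D"
    using capacity_count D_nonneg by (intro mult_right_mono) (simp_all only: of_nat_le_iff)
  finally have "real (card ?R) * (real k * (c - real m - g)) \<le> real (card ?R) * (real m * D)"
    by (simp add: algebra_simps)
  then have "real k * (c - real m - g) \<le> real m * D" using R_pos by simp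
  then show False using slack by simp
qed

end

lemma feasible_augment:
  assumes "feasible s" "u \<in> L" "card (s u) < m"
  shows "\<exists>s'. feasible s' \<and> num_selected s' = Suc (num_selected s)"
  using no_maximal_short_selection[OF assms] by blast

theorem full_feasible_selection_exists: "\<exists>s. feasible s \<and> (\<forall>x\<in>L. card (s x) = m)"
proof -
  have "feasible (\<lambda>_. {})"
    using m_pos by (simp add: feasible_def selection_def conflict_free_def load_def)
  moreover have "num_selected s < m * card L + 1" if "feasible s" for s
  proof -
    have "num_selected s \<le> (\<Sum>x\<in>L. m)"
      unfolding num_selected_def using that by (intro sum_mono) (auto simp: feasible_def selection_def)
    then show ?thesis by (simp add: mult.commute less_Suc_eq_le)
  qed
  ultimately obtain s where s: "feasible s" and max: "\<And>s'. feasible s' \<Longrightarrow> num_selected s' \<le> num_selected s"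
    using ex_has_greatest_nat[of feasible "\<lambda>_. {}" num_selected] by blast
  have "card (s x) = m" if "x \<in> L" for x
  proof (rule ccontr)
    assume "card (s x) \<noteq> m"
    then have "card (s x) < m" using s that unfolding feasible_def selection_def by force
    then show False using feasible_augment[OF s that] max by fastforce
  qed
  then show ?thesis using s by blast
qed

end
section \<open>Multigraphs and partial colourings\<close>

lemma multigraph2_other_end:
  assumes "multigraph2 V E ends" "e \<in> E" "x \<in> ends e"
  obtains w where "w \<noteq> x" "ends e = {x, w}"
proof -
  have "card (ends e) = 2" using assms unfolding multigraph2_def by blast
  then obtain a b where "ends e = {a, b}" "a \<noteq> b" by (auto simp: card_2_iff)
  then show ?thesis using that assms(3) by (metis insert_commute insertE singletonD)
qed

lemma multigraph2_ends_eq: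
  assumes "multigraph2 V E ends" "e \<in> E" "x \<in> ends e" "w \<in> ends e" "w \<noteq> x"
  shows "ends e = {x, w}"
  using multigraph2_other_end[OF assms(1-3)] assms(4,5) by (metis insertE singletonD)

lemma adjacent_sym: "adjacent E ends u v \<Longrightarrow> adjacent E ends v u"
  unfolding adjacent_def by (metis insert_commute)

lemma adjacent_neq:
  assumes "multigraph2 V E ends" "adjacent E ends u v"
  shows "u \<noteq> v"
  using assms unfolding multigraph2_def adjacent_def by fastforce

lemma sum_card_parallel_le:
  assumes "multigraph2 V E ends" "finite W"
  shows "(\<Sum>w\<in>W. card {e\<in>E. ends e = {v, w}}) \<le> 2 * card (nbhd E ends v \<inter> W)"
proof -
  have zero: "\<forall>w\<in>W - nbhd E ends v \<inter> W. card {e\<in>E. ends e = {v, w}} = 0"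
  proof
    fix w assume "w \<in> W - nbhd E ends v \<inter> W"
    then have "{e\<in>E. ends e = {v, w}} = {}" unfolding nbhd_def adjacent_def by auto
    then show "card {e\<in>E. ends e = {v, w}} = 0" by (simp only: card.empty)
  qed
  have "(\<Sum>w\<in>W. card {e\<in>E. ends e = {v, w}}) = (\<Sum>w\<in>nbhd E ends v \<inter> W. card {e\<in>E. ends e = {v, w}})"
    by (rule sum.mono_neutral_right[OF assms(2) _ zero]) blast
  also have "\<dots> \<le> (\<Sum>w\<in>nbhd E ends v \<inter> W. 2)"
    using assms(1) unfolding multigraph2_def by (intro sum_mono) simp
  finally show ?thesis by simp
qed

definition proper_partial_coloring :: "'e set \<Rightarrow> ('e \<Rightarrow> 'v set) \<Rightarrow> ('e \<Rightarrow> 'c option) \<Rightarrow> bool" where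
  "proper_partial_coloring E ends c \<longleftrightarrow>
     (\<forall>e\<in>E. \<forall>f\<in>E. e \<noteq> f \<and> ends e \<inter> ends f \<noteq> {} \<and> c e \<noteq> None \<longrightarrow> c e \<noteq> c f)"

lemma proper_partial_coloring_phase1:
  "proper_edge_coloring E ends \<sigma> \<Longrightarrow> proper_partial_coloring E ends (phase1 U ends \<sigma>)"
  unfolding proper_partial_coloring_def proper_edge_coloring_def phase1_def by auto

lemma Scol_phase2: "Scol E ends (phase2 V E ends c ch) x = Scol (E - UC2 V E ends c ch x) ends c x"
  unfolding Scol_def phase2_def UC2_def by (intro Collect_cong) (auto split: if_splits)

lemma Scol_subset_image: "Scol A ends c x \<subseteq> (\<lambda>e. the (c e)) ` A"
proof
  fix col assume "col \<in> Scol A ends c x"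
  then obtain e where "e \<in> A" "c e = Some col" unfolding Scol_def by blast
  then show "col \<in> (\<lambda>e. the (c e)) ` A" by force
qed

lemma finite_Scol: "finite A \<Longrightarrow> finite (Scol A ends c x)"
  by (rule finite_subset[OF Scol_subset_image]) simp

lemma card_Scol_le:
  assumes "finite A"
  shows "card (Scol A ends c x) \<le> card A"
proof -
  have "card (Scol A ends c x) \<le> card ((\<lambda>e. the (c e)) ` A)"
    using assms by (intro card_mono[OF _ Scol_subset_image]) simp
  also have "\<dots> \<le> card A" using assms by (rule card_image_le)
  finally show ?thesis .
qed

lemma card_sym_diff_Scol_le:
  assumes "Scol (E - A) ends c u = Scol (E - B) ends c v" "finite A" "finite B"
  shows "card (sym_diff (Scol E ends c u) (Scol E ends c v)) \<le> card A + card B"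
proof -
  have split: "Scol E ends c x \<subseteq> Scol (E - C) ends c x \<union> Scol C ends c x"
    and mono: "Scol (E - C) ends c x \<subseteq> Scol E ends c x" for C x
    unfolding Scol_def by blast+
  have "sym_diff (Scol E ends c u) (Scol E ends c v) \<subseteq> Scol A ends c u \<union> Scol B ends c v"
    using split[of u A] split[of v B] mono[of B v] mono[of A u] assms(1) by blast
  then have "card (sym_diff (Scol E ends c u) (Scol E ends c v))
      \<le> card (Scol A ends c u \<union> Scol B ends c v)"
    by (rule card_mono[rotated]) (simp add: finite_Scol assms(2,3))
  also have "\<dots> \<le> card A + card B"
    using card_Un_le card_Scol_le[OF assms(2)] card_Scol_le[OF assms(3)] by (meson add_mono le_trans)
  finally show ?thesis .
qed

lemma Scol_Diff_insert_inj:
  assumes "proper_partial_coloring E ends c" "b \<in> E" "x \<in> ends b" "c b \<noteq> None" "b \<notin> B"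
    and "Scol (E - insert b B) ends c x = Scol (E - insert b' B) ends c x"
  shows "b = b'"
proof (rule ccontr)
  assume "b \<noteq> b'"
  obtain col where col: "c b = Some col" using assms(4) by blast
  have "col \<in> Scol (E - insert b' B) ends c x"
    unfolding Scol_def using \<open>b \<noteq> b'\<close> assms(2,3,5) col by blast
  then have "col \<in> Scol (E - insert b B) ends c x" using assms(6) by simp
  then obtain e where e: "e \<in> E" "e \<noteq> b" "x \<in> ends e" "c e = c b"
    unfolding Scol_def using col by auto
  have "\<forall>f\<in>E. b \<noteq> f \<and> ends b \<inter> ends f \<noteq> {} \<and> c b \<noteq> None \<longrightarrow> c b \<noteq> c f"
    using assms(1,2) unfolding proper_partial_coloring_def by blast
  then show False using e assms(3,4) by auto
qed

section \<open>Phase II\<close>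

locale phase2_setting =
  fixes V :: "'v set" and E :: "'e set" and ends :: "'e \<Rightarrow> 'v set" and c :: "'e \<Rightarrow> 'c option"
  assumes multigraph: "multigraph2 V E ends"
    and proper: "proper_partial_coloring E ends c"
    and maxdeg_ge: "real (maxdeg V E ends) \<ge> 100"
    and few_low_neighbours: "v \<in> V - HV V E ends \<Longrightarrow>
        real (card (nbhd E ends v \<inter> Lset V E ends c)) \<le> real (maxdeg V E ends) / 100"
begin

abbreviation L :: "'v set" where "L \<equiv> Lset V E ends c"

abbreviation \<Delta> :: real where "\<Delta> \<equiv> real (maxdeg V E ends)"

(* Determined only for candidate edges (cand_ends); elsewhere THE gives an arbitrary vertex. *)
definition far_end :: "'e \<Rightarrow> 'v" where
  "far_end e = (THE w. w \<in> ends e \<and> w \<notin> L)"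

lemma finite_E: "finite E"
  using multigraph unfolding multigraph2_def by blast

lemma L_subset: "L \<subseteq> V - HV V E ends"
  unfolding Lset_def by blast

lemma finite_L: "finite L"
  using L_subset multigraph unfolding multigraph2_def by (meson finite_Diff finite_subset)

lemma finite_cand: "finite (cand V E ends c x)"
  using finite_E unfolding cand_def by simp

lemma cand_ends:
  assumes "x \<in> L" "e \<in> cand V E ends c x"
  shows "ends e = {x, far_end e}" "far_end e \<notin> L"
proof -
  have e: "e \<in> E" "x \<in> ends e" and far: "\<forall>w\<in>ends e. w \<noteq> x \<longrightarrow> w \<notin> L"
    using assms(2) unfolding cand_def by auto
  obtain w where w: "w \<noteq> x" "ends e = {x, w}" using multigraph2_other_end[OF multigraph e] .
  have "far_end e = w"
    unfolding far_end_def using w far assms(1) by (intro the_equality) auto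
  then show "ends e = {x, far_end e}" "far_end e \<notin> L" using w far by auto
qed

lemma card_cand_ge:
  assumes "x \<in> L"
  shows "\<Delta> / 3 - 19 - \<Delta> / 50 \<le> real (card (cand V E ends c x))"
proof -
  let ?uncoloured = "{e\<in>E. x \<in> ends e \<and> c e = None}"
  let ?to_L = "\<Union>w\<in>L. {e\<in>E. ends e = {x, w}}"
  have "{e\<in>E. x \<in> ends e} \<subseteq> cand V E ends c x \<union> ?uncoloured \<union> ?to_L"
  proof
    fix e assume e: "e \<in> {e\<in>E. x \<in> ends e}"
    show "e \<in> cand V E ends c x \<union> ?uncoloured \<union> ?to_L"
    proof (cases "c e = None \<or> (\<forall>w\<in>ends e. w \<noteq> x \<longrightarrow> w \<notin> L)")
      case True
      then show ?thesis using e unfolding cand_def by auto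
    next
      case False
      then obtain w where "w \<in> ends e" "w \<noteq> x" "w \<in> L" by blast
      then show ?thesis using multigraph2_ends_eq[OF multigraph] e by blast
    qed
  qed
  then have "deg E ends x \<le> card (cand V E ends c x \<union> ?uncoloured \<union> ?to_L)"
    unfolding deg_def by (rule card_mono[rotated]) (simp add: finite_E finite_cand finite_L)
  also have "\<dots> \<le> card (cand V E ends c x) + card ?uncoloured + card ?to_L"
    by (meson add_mono card_Un_le le_trans order_refl)
  finally have deg_le: "deg E ends x \<le> card (cand V E ends c x) + card ?uncoloured + card ?to_L" .
  have "card ?to_L \<le> 2 * card (nbhd E ends x \<inter> L)"
    using card_UN_le[OF finite_L] sum_card_parallel_le[OF multigraph finite_L] by (rule le_trans)
  with deg_le have "real (deg E ends x)
      \<le> real (card (cand V E ends c x) + card ?uncoloured + 2 * card (nbhd E ends x \<inter> L))"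
    by (intro of_nat_mono) linarith
  moreover have "card ?uncoloured < 20" using assms unfolding Lset_def by simp
  moreover have "real (card (nbhd E ends x \<inter> L)) \<le> \<Delta> / 100"
    using assms L_subset few_low_neighbours by blast
  moreover have "\<Delta> / 3 \<le> real (deg E ends x)" using assms L_subset unfolding HV_def by auto
  ultimately show ?thesis by simp
qed

lemma demand_le:
  assumes "t \<in> V - HV V E ends - L"
  shows "real (\<Sum>x\<in>L. card {e\<in>cand V E ends c x. far_end e = t}) \<le> \<Delta> / 50"
proof -
  have "(\<Sum>x\<in>L. card {e\<in>cand V E ends c x. far_end e = t}) \<le> (\<Sum>x\<in>L. card {e\<in>E. ends e = {t, x}})"
  proof (rule sum_mono)
    fix x assume "x \<in> L"
    then have "{e\<in>cand V E ends c x. far_end e = t} \<subseteq> {e\<in>E. ends e = {t, x}}"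
      using cand_ends unfolding cand_def by (auto simp: insert_commute)
    then show "card {e\<in>cand V E ends c x. far_end e = t} \<le> card {e\<in>E. ends e = {t, x}}"
      using finite_E by (intro card_mono) auto
  qed
  also have "\<dots> \<le> 2 * card (nbhd E ends t \<inter> L)"
    using sum_card_parallel_le[OF multigraph finite_L] .
  finally have "real (\<Sum>x\<in>L. card {e\<in>cand V E ends c x. far_end e = t})
      \<le> real (2 * card (nbhd E ends t \<inter> L))"
    by (rule of_nat_mono)
  moreover have "real (card (nbhd E ends t \<inter> L)) \<le> \<Delta> / 100"
    using assms few_low_neighbours by blast
  ultimately show ?thesis by simp
qed

sublocale sel: capacitated_selection L "cand V E ends c" far_end "V - HV V E ends - L"
  "\<lambda>u v. adjacent E ends u v \<and> deg E ends u = deg E ends v" "\<lambda>x S. Scol (E - S) ends c x"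
  5 4 "\<Delta> / 3 - 19 - \<Delta> / 50" "\<Delta> / 100" "\<Delta> / 50"
proof
  fix x assume x: "x \<in> L"
  have "{y\<in>L. (adjacent E ends x y \<and> deg E ends x = deg E ends y) \<and> y \<noteq> x} \<subseteq> nbhd E ends x \<inter> L"
    unfolding nbhd_def by blast
  then have "card {y\<in>L. (adjacent E ends x y \<and> deg E ends x = deg E ends y) \<and> y \<noteq> x}
      \<le> card (nbhd E ends x \<inter> L)"
    using finite_L by (intro card_mono) auto
  then show "real (card {y\<in>L. (adjacent E ends x y \<and> deg E ends x = deg E ends y) \<and> y \<noteq> x}) \<le> \<Delta> / 100"
    using x L_subset few_low_neighbours by (meson of_nat_mono order_trans subsetD)
next
  fix x b b' B
  assume "x \<in> L" "b \<in> cand V E ends c x" "b \<notin> B"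
    and "Scol (E - insert b B) ends c x = Scol (E - insert b' B) ends c x"
  then show "b = b'" using Scol_Diff_insert_inj[OF proper] unfolding cand_def by blast
next
  show "real 5 * (\<Delta> / 50) < real 4 * (\<Delta> / 3 - 19 - \<Delta> / 50 - real 5 - \<Delta> / 100)"
    using maxdeg_ge by simp
qed (use finite_L finite_cand adjacent_sym card_cand_ge demand_le in auto)

lemma UC2_eq_selection:
  assumes "sel.selection s" "x \<in> L"
  shows "UC2 V E ends c s x = s x"
proof
  show "UC2 V E ends c s x \<subseteq> s x"
  proof
    fix e assume "e \<in> UC2 V E ends c s x"
    then obtain w where w: "w \<in> L" "e \<in> s w" "x \<in> ends e" unfolding UC2_def by blast
    then have "e \<in> cand V E ends c w" using assms(1) unfolding sel.selection_def by blast
    then have "x = w" using cand_ends[OF w(1)] w(3) assms(2) by auto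
    then show "e \<in> s x" using w(2) by simp
  qed
  show "s x \<subseteq> UC2 V E ends c s x"
    using assms unfolding sel.selection_def UC2_def cand_def by blast
qed

lemma card_UC2_le_load:
  assumes "sel.selection s" "v \<notin> L"
  shows "card (UC2 V E ends c s v) \<le> sel.load s v"
proof -
  have "UC2 V E ends c s v \<subseteq> (\<Union>x\<in>L. {e\<in>s x. far_end e = v})"
  proof
    fix e assume "e \<in> UC2 V E ends c s v"
    then obtain x where x: "x \<in> L" "e \<in> s x" "v \<in> ends e" unfolding UC2_def by blast
    then have "e \<in> cand V E ends c x" using assms(1) unfolding sel.selection_def by blast
    then have "far_end e = v" using cand_ends[OF x(1)] x(3) assms(2) x(1) by auto
    then show "e \<in> (\<Union>x\<in>L. {e\<in>s x. far_end e = v})" using x by blast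
  qed
  then have "card (UC2 V E ends c s v) \<le> card (\<Union>x\<in>L. {e\<in>s x. far_end e = v})"
    using finite_L sel.selection_finite[OF assms(1)] by (intro card_mono) auto
  also have "\<dots> \<le> sel.load s v"
    unfolding sel.load_def using finite_L by (rule card_UN_le)
  finally show ?thesis .
qed

lemma phase2_support:
  assumes "sel.selection s" "\<forall>x\<in>L. card (s x) = 5"
  shows "s \<in> set_pmf (phase2_dist V E ends c)"
proof -
  have "s x \<in> set_pmf (pmf_of_set {S. S \<subseteq> cand V E ends c x \<and> card S = 5})" if "x \<in> L" for x
  proof -
    have "s x \<in> {S. S \<subseteq> cand V E ends c x \<and> card S = 5}"
      using assms that unfolding sel.selection_def by auto
    moreover have "finite {S. S \<subseteq> cand V E ends c x \<and> card S = 5}"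
      using finite_cand by simp
    ultimately show ?thesis by (subst set_pmf_of_set) auto
  qed
  then show ?thesis
    using assms(1) unfolding phase2_dist_def set_Pi_pmf[OF finite_L] PiE_dflt_def sel.selection_def
    by auto
qed

lemma card_UC2_le_4:
  assumes "sel.feasible s" "v \<in> V - HV V E ends - L"
  shows "card (UC2 V E ends c s v) \<le> 4"
  using card_UC2_le_load[of s v] assms unfolding sel.feasible_def by (meson DiffD2 le_trans)

lemma card_UC2_le_5:
  assumes "sel.feasible s" "\<forall>x\<in>L. card (s x) = 5" "v \<in> V - HV V E ends"
  shows "card (UC2 V E ends c s v) \<le> 5"
  using card_UC2_le_4[OF assms(1), of v] UC2_eq_selection[of s v] assms unfolding sel.feasible_def
  by (cases "v \<in> L") auto

lemma phase2_separates:
  assumes s: "sel.feasible s" "\<forall>x\<in>L. card (s x) = 5"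
    and distinct: "\<forall>u\<in>V - HV V E ends. \<forall>v\<in>V - HV V E ends.
        adjacent E ends u v \<and> deg E ends u = deg E ends v \<and> u \<notin> L \<longrightarrow>
        card (sym_diff (Scol E ends c u) (Scol E ends c v)) \<ge> 10"
    and u: "u \<in> V - HV V E ends" and v: "v \<in> V - HV V E ends"
    and adj: "adjacent E ends u v" "deg E ends u = deg E ends v"
  shows "Scol E ends (phase2 V E ends c s) u \<noteq> Scol E ends (phase2 V E ends c s) v"
proof (cases "u \<in> L \<and> v \<in> L")
  case True
  have "u \<noteq> v" using adjacent_neq[OF multigraph adj(1)] .
  then show ?thesis
    using True adj s UC2_eq_selection unfolding Scol_phase2 sel.feasible_def sel.conflict_free_def by auto
next
  case False
  have "10 \<le> card (sym_diff (Scol E ends c u) (Scol E ends c v))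
      \<and> card (UC2 V E ends c s u) + card (UC2 V E ends c s v) \<le> 9"
  proof (cases "u \<in> L")
    case False
    then show ?thesis using distinct u v adj card_UC2_le_4[OF s(1), of u] card_UC2_le_5[OF s v] by auto
  next
    case True
    then have "v \<notin> L" using False by blast
    have "10 \<le> card (sym_diff (Scol E ends c v) (Scol E ends c u))"
      using distinct u v \<open>v \<notin> L\<close> adjacent_sym[OF adj(1)] adj(2) by auto
    then show ?thesis
      using card_UC2_le_4[OF s(1), of v] card_UC2_le_5[OF s u] v \<open>v \<notin> L\<close> by (simp add: Un_commute)
  qed
  then show ?thesis
    using card_sym_diff_Scol_le[of E "UC2 V E ends c s u" ends c u "UC2 V E ends c s v" v] finite_E
    unfolding Scol_phase2 UC2_def by auto
qed

theorem phase2_good_with_positive_probability: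
  assumes "\<forall>u\<in>V - HV V E ends. \<forall>v\<in>V - HV V E ends.
        adjacent E ends u v \<and> deg E ends u = deg E ends v \<and> u \<notin> L \<longrightarrow>
        card (sym_diff (Scol E ends c u) (Scol E ends c v)) \<ge> 10"
  shows "measure_pmf.prob (phase2_dist V E ends c)
     {ch. (\<forall>v\<in>V - HV V E ends - L. card (UC2 V E ends c ch v) \<le> 4)
        \<and> (\<forall>u\<in>V - HV V E ends. \<forall>v\<in>V - HV V E ends.
              adjacent E ends u v \<and> deg E ends u = deg E ends v \<longrightarrow>
              Scol E ends (phase2 V E ends c ch) u \<noteq> Scol E ends (phase2 V E ends c ch) v)} > 0"
proof -
  obtain s where s: "sel.feasible s" "\<forall>x\<in>L. card (s x) = 5"
    using sel.full_feasible_selection_exists by blast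
  have "s \<in> set_pmf (phase2_dist V E ends c)"
    using phase2_support s unfolding sel.feasible_def by blast
  then show ?thesis
    using card_UC2_le_4[OF s(1)] phase2_separates[OF s assms] by (intro measure_pmf_posI) auto
qed

end

theorem lemma5:
  fixes V :: "'v set" and E :: "'e set" and ends :: "'e \<Rightarrow> 'v set"
    and \<sigma> :: "'e \<Rightarrow> 'c" and U :: "'e set"
  assumes G: "multigraph2 V E ends"
    and Delta: "real (maxdeg V E ends) > 10 ^ 20"
    and H_simple: "\<forall>e\<in>HE V E ends. \<forall>f\<in>HE V E ends. ends e = ends f \<longrightarrow> e = f"
    and proper: "proper_edge_coloring E ends \<sigma>"
    and U: "U \<subseteq> E - HE V E ends"
    and hypa: "\<forall>v\<in>V - HV V E ends.
        real (card (nbhd E ends v \<inter> Lset V E ends (phase1 U ends \<sigma>)))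
          \<le> real (maxdeg V E ends) / 100"
    and hypb: "\<forall>u\<in>V - HV V E ends. \<forall>v\<in>V - HV V E ends.
        adjacent E ends u v \<and> deg E ends u = deg E ends v
        \<and> u \<notin> Lset V E ends (phase1 U ends \<sigma>) \<longrightarrow>
        card (Scol E ends (phase1 U ends \<sigma>) u - Scol E ends (phase1 U ends \<sigma>) v
              \<union> (Scol E ends (phase1 U ends \<sigma>) v - Scol E ends (phase1 U ends \<sigma>) u)) \<ge> 10"
  shows "measure_pmf.prob (phase2_dist V E ends (phase1 U ends \<sigma>))
     {ch. (\<forall>v\<in>V - HV V E ends - Lset V E ends (phase1 U ends \<sigma>).
              card (UC2 V E ends (phase1 U ends \<sigma>) ch v) \<le> 4)
        \<and> (\<forall>u\<in>V - HV V E ends. \<forall>v\<in>V - HV V E ends.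
              adjacent E ends u v \<and> deg E ends u = deg E ends v \<longrightarrow>
              Scol E ends (phase2 V E ends (phase1 U ends \<sigma>) ch) u
                \<noteq> Scol E ends (phase2 V E ends (phase1 U ends \<sigma>) ch) v)} > 0"
proof -
  interpret phase2_setting V E ends "phase1 U ends \<sigma>"
    using G proper_partial_coloring_phase1[OF proper] Delta hypa by unfold_locales auto
  show ?thesis using phase2_good_with_positive_probability hypb by blast
qed

end
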